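(* A vertex of a monotonous quiver is phylogenetic if and only if it is normal and has finite height.
   Context: A quiver consists of a class of vertices and, for each ordered pair of vertices $(A,B)$, a set of edges $A\to B$ (loops and multiple edges allowed). An evolution of length $m\ge 0$ is a sequence $A_0\leftarrow A_1\leftarrow\cdots\leftarrow A_m$ of vertices together with edges $A_k\to A_{k-1}$ ($1\le k\le m$); $A_0$ is its initial and $A_m$ its terminal vertex. Write $A\le B$ ($A$ is an ancestor of $B$) if there is an evolution with initial vertex $A$ and terminal vertex $B$; $A,B$ are isotypic ($A\sim B$) if $A\le B$ and $B\le A$. A vertex $A$ is primitive if every ancestor of $A$ is isotypic to $A$. A full evolution for $X$ is an evolution with primitive initial vertex and terminal vertex $X$. The height $h(X)$ is the smallest length of a full evolution for $X$ ($\infty$ if none). A vertex $A_k$ ($0\le k<m$) of an evolution $A_0\leftarrow\cdots\leftarrow A_m$ is critical if $h(A_k)<\infty$ and $h(A_{k+1})=h(A_k)+1$. The critical ancestors of a vertex $B$ are the critical vertices of full evolutions terminating at $B$. $B$ is normal if any two critical ancestors of $B$ of equal height are isotypic. An evolution $\alpha=(A_0\leftarrow\cdots\leftarrow A_m)$ embeds in $\beta=(B_0\leftarrow\cdots\leftarrow B_n)$ if $m\le n$ and there are $0\le r_0<\cdots<r_m\le n$ with $A_k\sim B_{r_k}$. A universal evolution for $X$ is a full evolution for $X$ embedding in every full evolution for $X$; $X$ is phylogenetic if one exists. A quiver is monotonous if $h(A)\ge h(B)$ for every edge $A\to B$. *)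

theory Defs
  imports Main "HOL-Library.Extended_Nat"
begin

text \<open>A quiver: vertices of type 'v, and for each ordered pair (A,B) a set
  E A B :: 'e set of edges A \<rightarrow> B.\<close>

definition evolution :: "('v \<Rightarrow> 'v \<Rightarrow> 'e set) \<Rightarrow> 'v list \<Rightarrow> 'e list \<Rightarrow> bool" where
  "evolution E vs es \<longleftrightarrow> vs \<noteq> [] \<and> length es + 1 = length vs \<and>
     (\<forall>k. 1 \<le> k \<and> k < length vs \<longrightarrow> es ! (k - 1) \<in> E (vs ! k) (vs ! (k - 1)))"

definition evo_len :: "'v list \<Rightarrow> nat" where
  "evo_len vs = length vs - 1"

definition ancestor :: "('v \<Rightarrow> 'v \<Rightarrow> 'e set) \<Rightarrow> 'v \<Rightarrow> 'v \<Rightarrow> bool" where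
  "ancestor E A B \<longleftrightarrow> (\<exists>vs es. evolution E vs es \<and> hd vs = A \<and> last vs = B)"

definition isotypic :: "('v \<Rightarrow> 'v \<Rightarrow> 'e set) \<Rightarrow> 'v \<Rightarrow> 'v \<Rightarrow> bool" where
  "isotypic E A B \<longleftrightarrow> ancestor E A B \<and> ancestor E B A"

definition primitive :: "('v \<Rightarrow> 'v \<Rightarrow> 'e set) \<Rightarrow> 'v \<Rightarrow> bool" where
  "primitive E A \<longleftrightarrow> (\<forall>B. ancestor E B A \<longrightarrow> isotypic E B A)"

definition full_evolution :: "('v \<Rightarrow> 'v \<Rightarrow> 'e set) \<Rightarrow> 'v \<Rightarrow> 'v list \<Rightarrow> 'e list \<Rightarrow> bool" where
  "full_evolution E X vs es \<longleftrightarrow> evolution E vs es \<and> primitive E (hd vs) \<and> last vs = X"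

definition height :: "('v \<Rightarrow> 'v \<Rightarrow> 'e set) \<Rightarrow> 'v \<Rightarrow> enat" where
  "height E X = (INF vs \<in> {vs. \<exists>es. full_evolution E X vs es}. enat (evo_len vs))"

definition critical :: "('v \<Rightarrow> 'v \<Rightarrow> 'e set) \<Rightarrow> 'v list \<Rightarrow> nat \<Rightarrow> bool" where
  "critical E vs k \<longleftrightarrow> k < evo_len vs \<and> height E (vs ! k) < \<infinity> \<and>
     height E (vs ! (k + 1)) = height E (vs ! k) + 1"

definition critical_ancestors :: "('v \<Rightarrow> 'v \<Rightarrow> 'e set) \<Rightarrow> 'v \<Rightarrow> 'v set" where
  "critical_ancestors E B =
     {vs ! k | vs es k. full_evolution E B vs es \<and> critical E vs k}"

definition normal :: "('v \<Rightarrow> 'v \<Rightarrow> 'e set) \<Rightarrow> 'v \<Rightarrow> bool" where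
  "normal E B \<longleftrightarrow> (\<forall>C \<in> critical_ancestors E B. \<forall>D \<in> critical_ancestors E B.
      height E C = height E D \<longrightarrow> isotypic E C D)"

definition embeds :: "('v \<Rightarrow> 'v \<Rightarrow> 'e set) \<Rightarrow> 'v list \<Rightarrow> 'v list \<Rightarrow> bool" where
  "embeds E as bs \<longleftrightarrow> evo_len as \<le> evo_len bs \<and>
     (\<exists>r :: nat \<Rightarrow> nat. (\<forall>i j. i < j \<and> j \<le> evo_len as \<longrightarrow> r i < r j) \<and>
        (\<forall>k \<le> evo_len as. r k \<le> evo_len bs \<and> isotypic E (as ! k) (bs ! (r k))))"

definition universal_evolution :: "('v \<Rightarrow> 'v \<Rightarrow> 'e set) \<Rightarrow> 'v \<Rightarrow> 'v list \<Rightarrow> 'e list \<Rightarrow> bool" where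
  "universal_evolution E X vs es \<longleftrightarrow> full_evolution E X vs es \<and>
     (\<forall>ws fs. full_evolution E X ws fs \<longrightarrow> embeds E vs ws)"

definition phylogenetic :: "('v \<Rightarrow> 'v \<Rightarrow> 'e set) \<Rightarrow> 'v \<Rightarrow> bool" where
  "phylogenetic E X \<longleftrightarrow> (\<exists>vs es. universal_evolution E X vs es)"

definition monotonous :: "('v \<Rightarrow> 'v \<Rightarrow> 'e set) \<Rightarrow> bool" where
  "monotonous E \<longleftrightarrow> (\<forall>A B. E A B \<noteq> {} \<longrightarrow> height E A \<ge> height E B)"

end

theory Submission
  imports Defs
begin

text \<open>In a monotonous quiver heights never decrease along an evolution and grow by at most one
  per step.  Hence the k-th vertex of a full evolution of minimal length h(X) has height k, and
  every full evolution for X passes from height k to height k+1 at a critical vertex.  If X is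
  normal, that critical vertex is isotypic to the k-th vertex of the minimal evolution, which
  therefore embeds into every full evolution.  Conversely, a universal evolution has minimal
  length.  Given a critical ancestor C of height j, splice a minimal full evolution for C in
  front of the part of C's evolution above C; the universal evolution embeds into the result,
  and heights force its j-th vertex onto C itself.\<close>

text \<open>Ancestry, heights, criticality and embeddings depend only on the vertex list of an
  evolution, so we work with vertex lists whose consecutive vertices are joined by some edge.\<close>

definition edge_chain :: "('v \<Rightarrow> 'v \<Rightarrow> 'e set) \<Rightarrow> 'v list \<Rightarrow> bool" where
  "edge_chain E vs \<longleftrightarrow> vs \<noteq> [] \<and> (\<forall>k. Suc k < length vs \<longrightarrow> E (vs ! Suc k) (vs ! k) \<noteq> {})"

definition full_chain :: "('v \<Rightarrow> 'v \<Rightarrow> 'e set) \<Rightarrow> 'v \<Rightarrow> 'v list \<Rightarrow> bool" where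
  "full_chain E X vs \<longleftrightarrow> edge_chain E vs \<and> primitive E (hd vs) \<and> last vs = X"

lemma edge_chain_iff_evolution: "edge_chain E vs \<longleftrightarrow> (\<exists>es. evolution E vs es)"
proof
  assume c: "edge_chain E vs"
  define es where "es = map (\<lambda>k. SOME e. e \<in> E (vs ! Suc k) (vs ! k)) [0..<length vs - 1]"
  have "evolution E vs es"
    unfolding evolution_def
  proof (intro conjI allI impI)
    show "vs \<noteq> []" using c edge_chain_def by blast
    then show "length es + 1 = length vs" unfolding es_def by simp
  next
    fix k assume k: "1 \<le> k \<and> k < length vs"
    then obtain i where i: "k = Suc i" by (cases k) auto
    have "E (vs ! Suc i) (vs ! i) \<noteq> {}" using c k i edge_chain_def by blast
    then show "es ! (k - 1) \<in> E (vs ! k) (vs ! (k - 1))"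
      unfolding es_def using k i by (simp add: some_in_eq)
  qed
  then show "\<exists>es. evolution E vs es" by blast
next
  assume "\<exists>es. evolution E vs es"
  then obtain es where e: "evolution E vs es" by blast
  show "edge_chain E vs" unfolding edge_chain_def
  proof (intro conjI allI impI)
    show "vs \<noteq> []" using e evolution_def by blast
  next
    fix k assume "Suc k < length vs"
    then have "es ! (Suc k - 1) \<in> E (vs ! Suc k) (vs ! (Suc k - 1))"
      using e unfolding evolution_def by (metis le_add1 plus_1_eq_Suc)
    then show "E (vs ! Suc k) (vs ! k) \<noteq> {}" by auto
  qed
qed

lemma full_chain_iff_full_evolution: "full_chain E X vs \<longleftrightarrow> (\<exists>es. full_evolution E X vs es)"
  unfolding full_evolution_def full_chain_def edge_chain_iff_evolution by blast

lemma ancestor_iff_edge_chain: "ancestor E A B \<longleftrightarrow> (\<exists>vs. edge_chain E vs \<and> hd vs = A \<and> last vs = B)"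
  unfolding ancestor_def edge_chain_iff_evolution by blast

lemma height_eq_INF_full_chain: "height E X = (INF vs \<in> {vs. full_chain E X vs}. enat (length vs - 1))"
  unfolding height_def evo_len_def full_chain_iff_full_evolution by simp

lemma edge_chain_singleton: "edge_chain E [a]"
  unfolding edge_chain_def by simp

lemma edge_chain_nonempty: "edge_chain E vs \<Longrightarrow> vs \<noteq> []"
  unfolding edge_chain_def by simp

lemma edge_chain_edge: "edge_chain E vs \<Longrightarrow> Suc k < length vs \<Longrightarrow> E (vs ! Suc k) (vs ! k) \<noteq> {}"
  unfolding edge_chain_def by simp

lemma edge_chain_drop: "edge_chain E vs \<Longrightarrow> n < length vs \<Longrightarrow> edge_chain E (drop n vs)"
  unfolding edge_chain_def by auto

lemma edge_chain_take: "edge_chain E vs \<Longrightarrow> 0 < n \<Longrightarrow> edge_chain E (take n vs)"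
  unfolding edge_chain_def by auto

lemma edge_chain_append:
  assumes xs: "edge_chain E xs" and ys: "edge_chain E ys" and link: "E (hd ys) (last xs) \<noteq> {}"
  shows "edge_chain E (xs @ ys)"
  unfolding edge_chain_def
proof (intro conjI allI impI)
  show "xs @ ys \<noteq> []" using xs edge_chain_nonempty by auto
next
  fix k assume k: "Suc k < length (xs @ ys)"
  have "xs \<noteq> []" "ys \<noteq> []" using xs ys edge_chain_nonempty by auto
  consider "Suc k < length xs" | "Suc k = length xs" | "Suc k > length xs" by linarith
  then show "E ((xs @ ys) ! Suc k) ((xs @ ys) ! k) \<noteq> {}"
  proof cases
    case 1
    then show ?thesis using xs edge_chain_edge by (simp add: nth_append)
  next
    case 2
    then have "(xs @ ys) ! Suc k = hd ys" using \<open>ys \<noteq> []\<close> by (simp add: nth_append hd_conv_nth)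
    moreover have "(xs @ ys) ! k = last xs"
    proof -
      have "k = length xs - 1" using 2 by simp
      then show ?thesis using \<open>xs \<noteq> []\<close> by (simp add: nth_append last_conv_nth)
    qed
    ultimately show ?thesis using link by simp
  next
    case 3
    then obtain i where i: "k = length xs + i" by (metis less_Suc_eq_le le_Suc_ex)
    have "Suc i < length ys" using k i by simp
    then show ?thesis using ys edge_chain_edge i by (simp add: nth_append)
  qed
qed

lemma ancestor_refl: "ancestor E A A"
  unfolding ancestor_iff_edge_chain using edge_chain_singleton by fastforce

lemma ancestor_trans:
  assumes "ancestor E A B" "ancestor E B C" shows "ancestor E A C"
proof -
  obtain xs where x: "edge_chain E xs" "hd xs = A" "last xs = B"
    using assms(1) ancestor_iff_edge_chain by metis
  obtain ys where y: "edge_chain E ys" "hd ys = B" "last ys = C"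
    using assms(2) ancestor_iff_edge_chain by metis
  have "xs \<noteq> []" "ys \<noteq> []" using x y edge_chain_nonempty by auto
  show ?thesis
  proof (cases "tl ys = []")
    case True
    then have "C = B" using y \<open>ys \<noteq> []\<close> by (metis last_ConsL list.collapse)
    then show ?thesis using assms(1) by simp
  next
    case False
    then have l: "1 < length ys" using \<open>ys \<noteq> []\<close> by (cases ys) auto
    have "edge_chain E (tl ys)" using edge_chain_drop[OF y(1), of 1] l by (simp add: drop_Suc)
    moreover have "E (hd (tl ys)) (last xs) \<noteq> {}"
      using edge_chain_edge[OF y(1), of 0] l y(2) \<open>ys \<noteq> []\<close> False
      by (simp add: hd_conv_nth nth_tl x(3))
    ultimately have "edge_chain E (xs @ tl ys)" using edge_chain_append x(1) by blast
    moreover have "hd (xs @ tl ys) = A" "last (xs @ tl ys) = C"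
      using \<open>xs \<noteq> []\<close> x y False by (simp_all add: last_tl)
    ultimately show ?thesis unfolding ancestor_iff_edge_chain by blast
  qed
qed

lemma isotypic_refl: "isotypic E A A"
  unfolding isotypic_def by (simp add: ancestor_refl)

lemma isotypic_sym: "isotypic E A B \<Longrightarrow> isotypic E B A"
  unfolding isotypic_def by blast

lemma isotypic_trans: "isotypic E A B \<Longrightarrow> isotypic E B C \<Longrightarrow> isotypic E A C"
  unfolding isotypic_def using ancestor_trans[of E A B C] ancestor_trans[of E C B A] by simp

lemma full_chain_nonempty: "full_chain E X vs \<Longrightarrow> vs \<noteq> []"
  by (simp add: full_chain_def edge_chain_def)

lemma full_chain_last_nth: "full_chain E X vs \<Longrightarrow> vs ! (length vs - 1) = X"
  using full_chain_nonempty by (fastforce simp: full_chain_def last_conv_nth)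

lemma full_chain_take:
  assumes "full_chain E X vs" "k < length vs"
  shows "full_chain E (vs ! k) (take (Suc k) vs)"
proof -
  have "last (take (Suc k) vs) = vs ! k" using assms(2) by (simp add: take_Suc_conv_app_nth)
  moreover have "hd (take (Suc k) vs) = hd vs" by simp
  ultimately show ?thesis using assms edge_chain_take[of E vs "Suc k"] unfolding full_chain_def by simp
qed

lemma full_chain_splice:
  assumes ws: "full_chain E (vs ! k) ws" and vs: "edge_chain E vs" and k: "Suc k < length vs"
  shows "full_chain E (last vs) (ws @ drop (Suc k) vs)"
proof -
  have "edge_chain E ws" "primitive E (hd ws)" "last ws = vs ! k" "ws \<noteq> []"
    using ws full_chain_nonempty[OF ws] unfolding full_chain_def by auto
  moreover have "hd (drop (Suc k) vs) = vs ! Suc k" using k by (simp add: hd_drop_conv_nth)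
  ultimately have "edge_chain E (ws @ drop (Suc k) vs)"
    using edge_chain_append edge_chain_drop[OF vs k] edge_chain_edge[OF vs k] by metis
  then show ?thesis using \<open>primitive E (hd ws)\<close> \<open>ws \<noteq> []\<close> k by (simp add: full_chain_def)
qed

lemma height_le_full_chain: "full_chain E X vs \<Longrightarrow> height E X \<le> enat (length vs - 1)"
  unfolding height_eq_INF_full_chain by (rule INF_lower) simp

lemma height_finite_obtains_full_chain:
  assumes "height E X < \<infinity>"
  obtains vs where "full_chain E X vs" "height E X = enat (length vs - 1)"
proof -
  let ?S = "(\<lambda>vs. enat (length vs - 1)) ` {vs. full_chain E X vs}"
  have "?S \<noteq> {}"
  proof
    assume "?S = {}"
    then have "height E X = \<infinity>"
      by (simp only: height_eq_INF_full_chain image_image Inf_empty top_enat_def)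
    then show False using assms by simp
  qed
  then have "Inf ?S \<in> ?S"
    unfolding Inf_enat_def by (auto intro: LeastI)
  then obtain vs where "full_chain E X vs" "Inf ?S = enat (length vs - 1)" by blast
  then show ?thesis using that unfolding height_eq_INF_full_chain by simp
qed

lemma height_primitive: "primitive E A \<Longrightarrow> height E A = 0"
  using height_le_full_chain[of E A "[A]"] edge_chain_singleton[of E A]
  by (simp add: full_chain_def zero_enat_def[symmetric])

lemma height_hd_full_chain: "full_chain E X vs \<Longrightarrow> height E (vs ! 0) = 0"
  using full_chain_nonempty height_primitive by (fastforce simp: full_chain_def hd_conv_nth)

lemma height_nth_full_chain_le:
  "full_chain E X vs \<Longrightarrow> k < length vs \<Longrightarrow> height E (vs ! k) \<le> enat k"
  using height_le_full_chain[OF full_chain_take] by fastforce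

lemma height_edge_chain_Suc_le:
  assumes vs: "edge_chain E vs" and k: "Suc k < length vs"
  shows "height E (vs ! Suc k) \<le> height E (vs ! k) + 1"
proof (cases "height E (vs ! k) < \<infinity>")
  case False
  then show ?thesis by simp
next
  case True
  then obtain ws where ws: "full_chain E (vs ! k) ws" "height E (vs ! k) = enat (length ws - 1)"
    by (rule height_finite_obtains_full_chain)
  have "edge_chain E [vs ! k, vs ! Suc k]"
    using edge_chain_edge[OF vs k] by (simp add: edge_chain_def less_Suc_eq)
  then have "full_chain E (vs ! Suc k) (ws @ [vs ! Suc k])"
    using full_chain_splice[of E "[vs ! k, vs ! Suc k]" 0 ws] ws(1) by simp
  then have "height E (vs ! Suc k) \<le> enat (length ws)"
    using height_le_full_chain by fastforce
  also have "\<dots> = height E (vs ! k) + 1"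
    using ws full_chain_nonempty[OF ws(1)] by (simp add: one_enat_def)
  finally show ?thesis .
qed

lemma monotonous_edge_chain_height_mono:
  assumes "monotonous E" "edge_chain E vs" "i \<le> j" "j < length vs"
  shows "height E (vs ! i) \<le> height E (vs ! j)"
  using assms(3,4)
proof (induction j rule: dec_induct)
  case base
  then show ?case by simp
next
  case (step n)
  then have "height E (vs ! n) \<le> height E (vs ! Suc n)"
    using assms(1) edge_chain_edge[OF assms(2)] unfolding monotonous_def by blast
  then show ?case using step by (meson Suc_lessD order_trans)
qed

lemma monotonous_ancestor_height_le:
  assumes "monotonous E" "ancestor E A B" shows "height E A \<le> height E B"
proof -
  obtain vs where "edge_chain E vs" "hd vs = A" "last vs = B"
    using assms(2) ancestor_iff_edge_chain by metis
  then show ?thesis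
    using monotonous_edge_chain_height_mono[OF assms(1), of vs 0 "length vs - 1"] edge_chain_nonempty
    by (fastforce simp: hd_conv_nth last_conv_nth)
qed

lemma monotonous_isotypic_height_eq:
  "monotonous E \<Longrightarrow> isotypic E A B \<Longrightarrow> height E A = height E B"
  unfolding isotypic_def by (metis monotonous_ancestor_height_le order_antisym)

lemma minimal_full_chain_height_nth:
  assumes vs: "full_chain E X vs" and min: "height E X = enat (length vs - 1)"
    and k: "k < length vs"
  shows "height E (vs ! k) = enat k"
proof (rule ccontr)
  assume "height E (vs ! k) \<noteq> enat k"
  then have lt: "height E (vs ! k) < enat k"
    using height_nth_full_chain_le[OF vs k] by simp
  then have "height E (vs ! k) < \<infinity>" using enat_iless by fastforce
  then obtain ws where ws: "full_chain E (vs ! k) ws" "height E (vs ! k) = enat (length ws - 1)"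
    by (rule height_finite_obtains_full_chain)
  show False
  proof (cases "Suc k < length vs")
    case False
    then have "k = length vs - 1" using k by simp
    then have "vs ! k = X" using full_chain_last_nth[OF vs] by simp
    then show False using lt min \<open>k = length vs - 1\<close> by simp
  next
    case True
    have "full_chain E X (ws @ drop (Suc k) vs)"
      using full_chain_splice[OF ws(1) _ True] vs unfolding full_chain_def by auto
    then have "height E X \<le> enat (length (ws @ drop (Suc k) vs) - 1)"
      by (rule height_le_full_chain)
    moreover have "length (ws @ drop (Suc k) vs) - 1 < length vs - 1"
      using lt ws(2) True by simp
    ultimately show False using min by simp
  qed
qed

lemma enat_unit_steps_crossing:
  fixes f :: "nat \<Rightarrow> enat"
  assumes "f 0 = 0" "\<forall>k<p. f (Suc k) \<le> f k + 1" "enat (Suc j) \<le> f p"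
  shows "\<exists>k<p. f k = enat j \<and> f (Suc k) = enat (Suc j)"
  using assms(2,3)
proof (induction p)
  case 0
  then show ?case using assms(1) by (simp add: zero_enat_def)
next
  case (Suc p)
  show ?case
  proof (cases "enat (Suc j) \<le> f p")
    case True
    then obtain k where "k < p" "f k = enat j \<and> f (Suc k) = enat (Suc j)"
      using Suc by auto
    then show ?thesis by (intro exI[of _ k]) simp
  next
    case False
    then have "f p < enat (Suc j)" by simp
    then obtain a where fa: "f p = enat a" using enat_iless by blast
    then have "a \<le> j" using False by simp
    have "f (Suc p) \<le> f p + 1" using Suc.prems(1) by simp
    then have "f (Suc p) \<le> enat (Suc a)" using fa by (simp add: one_enat_def)
    moreover obtain c where "f (Suc p) = enat c" using \<open>f (Suc p) \<le> enat (Suc a)\<close> enat_ile by blast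
    ultimately have fc: "f (Suc p) = enat c" "c \<le> Suc a" by simp_all
    have "Suc j \<le> c" using Suc.prems(2) fc by simp
    then have "a = j" "c = Suc j" using \<open>a \<le> j\<close> fc by auto
    then show ?thesis using fa fc by blast
  qed
qed

lemma full_chain_critical_of_height:
  assumes bs: "full_chain E X bs" and n: "height E X = enat n" and k: "k < n"
  obtains i where "critical E bs i" "height E (bs ! i) = enat k"
proof -
  have bc: "edge_chain E bs" using bs unfolding full_chain_def by simp
  have "\<exists>i < length bs - 1. height E (bs ! i) = enat k \<and> height E (bs ! Suc i) = enat (Suc k)"
  proof (rule enat_unit_steps_crossing[where f = "\<lambda>i. height E (bs ! i)"])
    show "height E (bs ! 0) = 0" using height_hd_full_chain[OF bs] .
    show "\<forall>i < length bs - 1. height E (bs ! Suc i) \<le> height E (bs ! i) + 1"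
      using height_edge_chain_Suc_le[OF bc] by auto
    show "enat (Suc k) \<le> height E (bs ! (length bs - 1))"
      using full_chain_last_nth[OF bs] n k by simp
  qed
  then obtain i where "i < length bs - 1" "height E (bs ! i) = enat k"
    "height E (bs ! Suc i) = enat (Suc k)" by blast
  then have "critical E bs i"
    unfolding critical_def evo_len_def by (simp add: eSuc_enat[symmetric] eSuc_plus_1)
  then show ?thesis using that \<open>height E (bs ! i) = enat k\<close> by blast
qed

lemma universal_evolution_iff_full_chain:
  "universal_evolution E X as es \<longleftrightarrow>
     full_evolution E X as es \<and> (\<forall>ws. full_chain E X ws \<longrightarrow> embeds E as ws)"
  unfolding universal_evolution_def full_chain_iff_full_evolution by blast

lemma universal_evolution_height:
  assumes "universal_evolution E X as es"
  shows "height E X = enat (length as - 1)"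
proof -
  have univ: "full_evolution E X as es" "\<forall>ws. full_chain E X ws \<longrightarrow> embeds E as ws"
    using assms unfolding universal_evolution_iff_full_chain by simp_all
  then have "full_chain E X as" unfolding full_chain_iff_full_evolution by blast
  then have le: "height E X \<le> enat (length as - 1)" by (rule height_le_full_chain)
  then have "height E X < \<infinity>" using enat_ile[OF le] by auto
  then obtain ws where ws: "full_chain E X ws" "height E X = enat (length ws - 1)"
    by (rule height_finite_obtains_full_chain)
  have "evo_len as \<le> evo_len ws" using univ(2) ws(1) unfolding embeds_def by blast
  then show ?thesis using le ws(2) unfolding evo_len_def by simp
qed

text \<open>The vertices of height h(C) on the spliced full evolution are exactly C: before C they
  have smaller height, after C larger.\<close>

lemma monotonous_splice_vertex_of_height:
  assumes mono: "monotonous E"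
    and ds: "full_chain E (bs ! r) ds" "height E (bs ! r) = enat (length ds - 1)"
    and bs: "edge_chain E bs" "Suc r < length bs"
    and rise: "height E (bs ! r) < height E (bs ! Suc r)"
    and i: "i < length (ds @ drop (Suc r) bs)"
    and hi: "height E ((ds @ drop (Suc r) bs) ! i) = height E (bs ! r)"
  shows "(ds @ drop (Suc r) bs) ! i = bs ! r"
proof (cases "i < length ds")
  case True
  then have "height E (ds ! i) = enat i" using minimal_full_chain_height_nth[OF ds] by blast
  then have "i = length ds - 1" using hi ds(2) True by (simp add: nth_append)
  then show ?thesis
    using True full_chain_last_nth[OF ds(1)] by (simp add: nth_append)
next
  case False
  then have "(ds @ drop (Suc r) bs) ! i = bs ! (Suc r + (i - length ds))"
    using bs(2) by (simp add: nth_append)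
  moreover have "Suc r + (i - length ds) < length bs" using i False bs(2) by simp
  ultimately have "height E (bs ! Suc r) \<le> height E (bs ! r)"
    using monotonous_edge_chain_height_mono[OF mono bs(1), of "Suc r" "Suc r + (i - length ds)"] hi
    by simp
  then show ?thesis using rise by simp
qed

lemma universal_evolution_critical_isotypic:
  assumes mono: "monotonous E" and univ: "universal_evolution E X as es"
    and bs: "full_chain E X bs" and cr: "critical E bs r" and hr: "height E (bs ! r) = enat j"
  shows "isotypic E (as ! j) (bs ! r)"
proof -
  have "full_evolution E X as es" and emb: "\<forall>ws. full_chain E X ws \<longrightarrow> embeds E as ws"
    using univ unfolding universal_evolution_iff_full_chain by simp_all
  then have as: "full_chain E X as" unfolding full_chain_iff_full_evolution by blast
  have min: "height E X = enat (length as - 1)" using universal_evolution_height[OF univ] .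
  have bc: "edge_chain E bs" using bs unfolding full_chain_def by simp
  have r: "Suc r < length bs" and hs: "height E (bs ! Suc r) = enat (Suc j)"
    using cr hr unfolding critical_def evo_len_def by (auto simp: one_enat_def)
  obtain ds where ds: "full_chain E (bs ! r) ds" "height E (bs ! r) = enat (length ds - 1)"
    using height_finite_obtains_full_chain[of E "bs ! r"] hr by auto
  let ?g = "ds @ drop (Suc r) bs"
  have "full_chain E X ?g"
    using full_chain_splice[OF ds(1) bc r] bs unfolding full_chain_def by simp
  then obtain \<rho> where \<rho>: "\<forall>k \<le> evo_len as. \<rho> k \<le> evo_len ?g \<and> isotypic E (as ! k) (?g ! \<rho> k)"
    using emb unfolding embeds_def by blast
  have "height E (bs ! Suc r) \<le> height E X"
    using monotonous_edge_chain_height_mono[OF mono bc, of "Suc r" "length bs - 1"] r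
      full_chain_last_nth[OF bs] by simp
  then have "j < length as" using hs min by simp
  then have iso: "isotypic E (as ! j) (?g ! \<rho> j)" and "\<rho> j \<le> length ?g - 1"
    using \<rho> unfolding evo_len_def by auto
  moreover have "\<rho> j < length ?g"
  proof -
    have "0 < length ?g" using full_chain_nonempty[OF ds(1)] by simp
    then show ?thesis using \<open>\<rho> j \<le> length ?g - 1\<close> by linarith
  qed
  moreover have "height E (?g ! \<rho> j) = height E (bs ! r)"
    using monotonous_isotypic_height_eq[OF mono iso] minimal_full_chain_height_nth[OF as min]
      \<open>j < length as\<close> hr by simp
  ultimately have "?g ! \<rho> j = bs ! r"
    using monotonous_splice_vertex_of_height[OF mono ds bc r] hr hs by simp
  then show ?thesis using iso by simp
qed

lemma universal_evolution_normal:
  assumes mono: "monotonous E" and univ: "universal_evolution E X as es"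
  shows "normal E X"
  unfolding normal_def
proof (intro ballI impI)
  fix C D assume "C \<in> critical_ancestors E X" "D \<in> critical_ancestors E X"
    and eq: "height E C = height E D"
  then obtain bs r cs s where C: "C = bs ! r" "full_chain E X bs" "critical E bs r"
    and D: "D = cs ! s" "full_chain E X cs" "critical E cs s"
    unfolding critical_ancestors_def full_chain_iff_full_evolution by blast
  obtain j where "height E C = enat j"
    using C(1,3) unfolding critical_def by (cases "height E C") auto
  then have "isotypic E (as ! j) C" "isotypic E (as ! j) D"
    using universal_evolution_critical_isotypic[OF mono univ] C D eq by metis+
  then show "isotypic E C D" by (metis isotypic_sym isotypic_trans)
qed

lemma monotonous_minimal_full_chain_embeds:
  assumes mono: "monotonous E" and normal: "normal E X"
    and as: "full_chain E X as" and min: "height E X = enat (length as - 1)"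
    and bs: "full_chain E X bs"
  shows "embeds E as bs"
proof -
  define n where "n = length as - 1"
  define p where "p = length bs - 1"
  have "n \<le> p" using height_le_full_chain[OF bs] min unfolding n_def p_def by simp
  have bc: "edge_chain E bs" using bs unfolding full_chain_def by simp
  have ex: "\<exists>i. critical E bs i \<and> height E (bs ! i) = enat k" if "k < n" for k
    using full_chain_critical_of_height[OF bs] min that unfolding n_def by metis
  \<comment> \<open>\<open>\<rho> k\<close> is a vertex of \<open>bs\<close> where the height rises from k to k+1; X is sent to X.\<close>
  define \<rho> where "\<rho> k = (if k < n then SOME i. critical E bs i \<and> height E (bs ! i) = enat k else p)"
    for k
  have \<rho>: "critical E bs (\<rho> k) \<and> height E (bs ! \<rho> k) = enat k" if "k < n" for k
    using someI_ex[OF ex[OF that]] that unfolding \<rho>_def by simp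
  then have \<rho>_lt: "\<rho> k < p" if "k < n" for k
    using that unfolding critical_def evo_len_def p_def by blast
  have "\<rho> i < \<rho> j" if "i < j" "j \<le> n" for i j
  proof (cases "j = n")
    case True
    then show ?thesis using \<rho>_lt[of i] that unfolding \<rho>_def by simp
  next
    case False
    show ?thesis
    proof (rule ccontr)
      assume "\<not> \<rho> i < \<rho> j"
      then have "height E (bs ! \<rho> j) \<le> height E (bs ! \<rho> i)"
        using monotonous_edge_chain_height_mono[OF mono bc, of "\<rho> j" "\<rho> i"] \<rho>_lt[of i] that
        unfolding p_def by simp
      then show False using \<rho>[of i] \<rho>[of j] that False by simp
    qed
  qed
  moreover have "isotypic E (as ! k) (bs ! \<rho> k)" if "k \<le> n" for k
  proof (cases "k = n")
    case True
    then show ?thesis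
      using full_chain_last_nth[OF as] full_chain_last_nth[OF bs] isotypic_refl
      unfolding \<rho>_def n_def p_def by simp
  next
    case False
    then have k: "k < n" using that by simp
    have ha: "height E (as ! k) = enat k" "height E (as ! Suc k) = enat (Suc k)"
      using minimal_full_chain_height_nth[OF as min] k unfolding n_def by simp_all
    then have "critical E as k"
      using k unfolding critical_def evo_len_def n_def by (simp add: eSuc_enat[symmetric] eSuc_plus_1)
    then have "as ! k \<in> critical_ancestors E X" "bs ! \<rho> k \<in> critical_ancestors E X"
      using as bs \<rho>[OF k] unfolding critical_ancestors_def full_chain_iff_full_evolution by blast+
    then show ?thesis using normal ha(1) \<rho>[OF k] unfolding normal_def by simp
  qed
  moreover have "\<rho> k \<le> p" if "k \<le> n" for k
    using \<rho>_lt[of k] that unfolding \<rho>_def by (cases "k < n") auto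
  ultimately show ?thesis
    using \<open>n \<le> p\<close> unfolding embeds_def evo_len_def n_def p_def by blast
qed

theorem theorem6p1:
  fixes E :: "'v \<Rightarrow> 'v \<Rightarrow> 'e set" and X :: 'v
  assumes "monotonous E"
  shows "phylogenetic E X \<longleftrightarrow> normal E X \<and> height E X < \<infinity>"
proof
  assume "phylogenetic E X"
  then obtain as es where univ: "universal_evolution E X as es"
    unfolding phylogenetic_def by blast
  then show "normal E X \<and> height E X < \<infinity>"
    using universal_evolution_normal[OF assms univ] universal_evolution_height[OF univ] by simp
next
  assume "normal E X \<and> height E X < \<infinity>"
  then have normal: "normal E X" and "height E X < \<infinity>" by simp_all
  from this(2) obtain as where as: "full_chain E X as" "height E X = enat (length as - 1)"
    by (rule height_finite_obtains_full_chain)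
  then obtain es where "full_evolution E X as es"
    unfolding full_chain_iff_full_evolution by blast
  moreover have "\<forall>ws. full_chain E X ws \<longrightarrow> embeds E as ws"
    using monotonous_minimal_full_chain_embeds[OF assms normal as] by blast
  ultimately have "universal_evolution E X as es"
    unfolding universal_evolution_iff_full_chain by simp
  then show "phylogenetic E X" unfolding phylogenetic_def by blast
qed

end
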